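(* Let $m,n$ be positive integers and let $\lambda,\mu,\nu$ be partitions of the same positive integer $N$ with $\ell(\mu)\le m$, $\ell(\nu)\le n$, $\ell(\lambda)\le mn$. Then $\mathbf b^{m,n}(\lambda,\mu,\nu;Id)=\mathbf 0$ if and only if $$\mu_u=\lambda_u+\sum_{i=m+(u-1)(n-1)+1}^{m+u(n-1)}\lambda_i\quad(u=1,\dots,m),\qquad \nu_1=\sum_{i=1}^m\lambda_i,\qquad \nu_v=\sum_{i=0}^{m-1}\lambda_{m+(n-1)i+v-1}\quad(v=2,\dots,n).$$
   Context: Partitions are padded with zeros: $\lambda=(\lambda_1,\dots,\lambda_{mn})$, $\mu=(\mu_1,\dots,\mu_m)$, $\nu=(\nu_1,\dots,\nu_n)$. Variables $s_0,\dots,s_{m-1},t_1,\dots,t_{n-2}$; $T=t_1\cdots t_{n-2}$. Monomials $x_i=s_1\cdots s_iT^i$ ($1\le i\le m-1$), $y_j=s_0s_1\cdots s_{m-1}T^{m-1}t_1\cdots t_{j-1}$ ($1\le j\le n-1$). For a monomial $M$, $e(M)\in\mathbb Z^{m+n-2}$ is its exponent vector with coordinates ordered $s_0,\dots,s_{m-1},t_1,\dots,t_{n-2}$. Let $(z_1,\dots,z_{mn})=(1,x_1,\dots,x_{m-1},y_1,\dots,y_{n-1},x_1y_1,\dots,x_1y_{n-1},x_2y_1,\dots,x_{m-1}y_{n-1})$. Then $\mathbf b^{m,n}(\lambda,\mu,\nu;Id)=e\big(\prod_{i=1}^{m-1}x_i^{\mu_{i+1}}\prod_{j=1}^{n-1}y_j^{\nu_{j+1}}\big)-e\big(\prod_{i=1}^{mn}z_i^{\lambda_i}\big)$.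 *)

theory Defs
  imports Main
begin

text \<open>Exponent vectors are represented as functions nat => int (coordinate c).
  Coordinate k (0 <= k < m) is the exponent of s_k; coordinate m + j - 1
  (1 <= j <= n-2) is the exponent of t_j; all other coordinates are 0.
  Multiplication of monomials corresponds to adding exponent vectors.\<close>

definition sv :: "nat \<Rightarrow> nat \<Rightarrow> int" where
  "sv k c = (if c = k then 1 else 0)"

definition tv :: "nat \<Rightarrow> nat \<Rightarrow> nat \<Rightarrow> int" where
  "tv m j c = sv (m + j - 1) c"

text \<open>e(T), T = t_1 ... t_{n-2}\<close>
definition eT :: "nat \<Rightarrow> nat \<Rightarrow> nat \<Rightarrow> int" where
  "eT m n c = (\<Sum>j=1..n-2. tv m j c)"

text \<open>e(x_i), x_i = s_1 ... s_i T^i\<close>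
definition ex :: "nat \<Rightarrow> nat \<Rightarrow> nat \<Rightarrow> nat \<Rightarrow> int" where
  "ex m n i c = (\<Sum>k=1..i. sv k c) + int i * eT m n c"

text \<open>e(y_j), y_j = s_0 s_1 ... s_{m-1} T^{m-1} t_1 ... t_{j-1}\<close>
definition ey :: "nat \<Rightarrow> nat \<Rightarrow> nat \<Rightarrow> nat \<Rightarrow> int" where
  "ey m n j c = (\<Sum>k<m. sv k c) + int (m - 1) * eT m n c + (\<Sum>l=1..j-1. tv m l c)"

text \<open>e(z_k) for 1 <= k <= mn, where
  (z_1,...,z_mn) = (1, x_1..x_{m-1}, y_1..y_{n-1}, x_1 y_1, ..., x_1 y_{n-1}, x_2 y_1, ..., x_{m-1} y_{n-1}).\<close>
definition ez :: "nat \<Rightarrow> nat \<Rightarrow> nat \<Rightarrow> nat \<Rightarrow> int" where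
  "ez m n k c =
     (if k = 1 then 0
      else if k \<le> m then ex m n (k - 1) c
      else if k \<le> m + n - 1 then ey m n (k - m) c
      else (let r = k - (m + n - 1) - 1
            in ex m n (r div (n - 1) + 1) c + ey m n (r mod (n - 1) + 1) c))"

text \<open>b^{m,n}(lambda, mu, nu; Id), partitions 1-indexed (lam i is lambda_i).\<close>
definition bvec :: "nat \<Rightarrow> nat \<Rightarrow> (nat \<Rightarrow> nat) \<Rightarrow> (nat \<Rightarrow> nat) \<Rightarrow> (nat \<Rightarrow> nat) \<Rightarrow> nat \<Rightarrow> int" where
  "bvec m n lam mu nu c =
     (\<Sum>i=1..m-1. int (mu (i + 1)) * ex m n i c)
   + (\<Sum>j=1..n-1. int (nu (j + 1)) * ey m n j c)
   - (\<Sum>k=1..m*n. int (lam k) * ez m n k c)"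

definition is_partition :: "nat \<Rightarrow> nat \<Rightarrow> (nat \<Rightarrow> nat) \<Rightarrow> bool" where
  "is_partition N L lam \<longleftrightarrow>
     (\<forall>i\<ge>1. lam (Suc i) \<le> lam i) \<and> (\<forall>i>L. lam i = 0) \<and> (\<Sum>i=1..L. lam i) = N"

end

theory Submission
  imports Defs
begin

(* Listing lambda_1, ..., lambda_mn in an m x n array whose cell (i, j) carries z = x_i y_j
   (with x_0 = y_0 = 1), the lambda-part of b becomes  sum_i r_i e(x_i) + sum_j c_j e(y_j)
   with r_i, c_j the row and column sums of the array.  So b is a combination of
   e(x_1), ..., e(x_(m-1)), e(y_1), ..., e(y_(n-1)) with coefficients mu_(i+1) - r_i and
   nu_(j+1) - c_j, and these vectors are linearly independent.  The two equations not seen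
   by b, mu_1 = r_0 and nu_1 = c_0, follow because mu, nu and lambda have the same size. *)

lemma sum_atLeastAtMost_blocks:
  fixes g :: "nat \<Rightarrow> 'a::comm_monoid_add"
  shows "(\<Sum>k=a+1..a+p*q. g k) = (\<Sum>i<p. \<Sum>j=1..q. g (a+i*q+j))"
proof (induction p)
  case 0
  then show ?case by simp
next
  case (Suc p)
  have "(\<Sum>k=a+1..a+Suc p*q. g k) = (\<Sum>k=a+1..(a+p*q)+q. g k)"
    by (simp add: algebra_simps)
  also have "\<dots> = (\<Sum>k=a+1..a+p*q. g k) + (\<Sum>k=(a+p*q)+1..(a+p*q)+q. g k)"
    by (rule sum.ub_add_nat) simp
  also have "(\<Sum>k=(a+p*q)+1..(a+p*q)+q. g k) = (\<Sum>j=1..q. g (a+p*q+j))"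
    using sum.shift_bounds_cl_nat_ivl[of g 1 "a+p*q" q] by (simp add: add.commute)
  finally show ?case using Suc by simp
qed

lemma sum_lessThan_split_first:
  fixes f :: "nat \<Rightarrow> 'a::comm_monoid_add"
  assumes "0 < M"
  shows "(\<Sum>i<M. f i) = f 0 + (\<Sum>i=1..M-1. f i)"
  using assms by (cases M) (simp_all only: sum.lessThan_Suc_shift, simp_all add: sum.atLeast1_atMost_eq)

lemma sum_lessThan_eq_sum_from_1:
  fixes f :: "nat \<Rightarrow> 'a::comm_monoid_add"
  assumes "f 0 = 0"
  shows "(\<Sum>i<M. f i) = (\<Sum>i=1..M-1. f i)"
  using assms sum_lessThan_split_first[of M f] by (cases "M = 0") simp_all

lemma zero_if_suffix_sums_zero:
  fixes f :: "nat \<Rightarrow> 'a::comm_monoid_add"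
  assumes suffix: "\<And>k. k \<in> {a..M} \<Longrightarrow> (\<Sum>i=k..M. f i) = 0" and i: "i \<in> {a..M}"
  shows "f i = 0"
proof -
  have "(\<Sum>i'=Suc i..M. f i') = 0"
    using suffix i by (cases "Suc i \<le> M") auto
  then show ?thesis
    using suffix[OF i] i by (simp add: sum.atLeast_Suc_atMost)
qed

lemma sum_if_le_eq_sum_atLeast:
  fixes f :: "nat \<Rightarrow> 'a::comm_monoid_add"
  assumes "a \<le> k"
  shows "(\<Sum>i=a..M. if k \<le> i then f i else 0) = (\<Sum>i=k..M. f i)"
proof -
  have "{i\<in>{a..M}. k \<le> i} = {k..M}"
    using assms by auto
  then show ?thesis
    by (simp flip: sum.inter_filter)
qed

lemma all_lessThan_iff_zero_and_pos:
  assumes "0 < (M::nat)"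
  shows "(\<forall>i<M. P i) \<longleftrightarrow> P 0 \<and> (\<forall>i\<in>{1..M-1}. P i)"
proof -
  have "{..<M} = insert 0 {1..M-1}"
    using assms by auto
  then have "(\<forall>i\<in>{..<M}. P i) \<longleftrightarrow> P 0 \<and> (\<forall>i\<in>{1..M-1}. P i)"
    by simp
  then show ?thesis
    by auto
qed

lemma ball_atLeast1_atMost_iff: "(\<forall>u\<in>{1..m}. P u) \<longleftrightarrow> (\<forall>i<m. P (Suc i))"
  unfolding image_Suc_lessThan[symmetric] by blast

lemma ball_atLeastAtMost_Suc_iff: "(\<forall>v\<in>{Suc a..Suc b}. P v) \<longleftrightarrow> (\<forall>j\<in>{a..b}. P (Suc j))"
  unfolding image_Suc_atLeastAtMost[symmetric] by blast

lemma all_lessThan_eq_iff_all_pos_eq: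
  fixes a b :: "nat \<Rightarrow> 'a::cancel_comm_monoid_add"
  assumes sums: "(\<Sum>i<M. a i) = (\<Sum>i<M. b i)" and "0 < M"
  shows "(\<forall>i<M. a i = b i) \<longleftrightarrow> (\<forall>i\<in>{1..M-1}. a i = b i)"
proof -
  have "a 0 = b 0" if pos: "\<forall>i\<in>{1..M-1}. a i = b i"
  proof -
    have "(\<Sum>i=1..M-1. a i) = (\<Sum>i=1..M-1. b i)"
      using pos by (intro sum.cong) auto
    then show ?thesis
      using sums by (simp add: sum_lessThan_split_first[OF \<open>0 < M\<close>])
  qed
  then show ?thesis
    unfolding all_lessThan_iff_zero_and_pos[OF \<open>0 < M\<close>] by blast
qed

lemma sum_sv:
  assumes "finite A"
  shows "(\<Sum>k\<in>A. sv k c) = (if c \<in> A then 1 else 0)"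
  using assms unfolding sv_def by simp

lemma sum_tv:
  assumes "finite A" and "0 \<notin> A"
  shows "(\<Sum>j\<in>A. tv m j c) = (if m \<le> c \<and> c + 1 - m \<in> A then 1 else 0)"
proof -
  have "(\<Sum>j\<in>A. tv m j c) = (\<Sum>j\<in>A. if j = c + 1 - m then (if m \<le> c then 1 else 0) else 0)"
  proof (intro sum.cong refl)
    fix j
    assume "j \<in> A"
    with assms(2) have "0 < j"
      by (cases j) auto
    then show "tv m j c = (if j = c + 1 - m then (if m \<le> c then 1 else 0) else 0)"
      unfolding tv_def sv_def by auto
  qed
  then show ?thesis
    using assms(1) by (simp add: sum.delta)
qed

lemma ex_coord_s:
  assumes "k < m"
  shows "ex m n i k = (if 0 < k \<and> k \<le> i then 1 else 0)"
  using assms unfolding ex_def eT_def by (simp add: sum_sv sum_tv)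

lemma ey_coord_s:
  assumes "k < m"
  shows "ey m n j k = 1"
  using assms unfolding ey_def eT_def by (simp add: sum_sv sum_tv)

lemma ey_coord_t:
  assumes "1 \<le> l" and "l \<le> n - 2"
  shows "ey m n j (m + l - 1) = int (m - 1) + (if l < j then 1 else 0)"
  using assms unfolding ey_def eT_def by (auto simp add: sum_sv sum_tv)

lemma ex_ey_linearly_independent:
  fixes \<alpha> \<beta> :: "nat \<Rightarrow> int"
  assumes "0 < m"
    and zero: "\<And>c. (\<Sum>i=1..m-1. \<alpha> i * ex m n i c) + (\<Sum>j=1..n-1. \<beta> j * ey m n j c) = 0"
  shows "\<forall>i\<in>{1..m-1}. \<alpha> i = 0" and "\<forall>j\<in>{1..n-1}. \<beta> j = 0"
proof -
  (* Coordinate s_0 sees only the total of the beta's, coordinate s_k the suffix sum of the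
     alpha's from k on, and coordinate t_l (once the alpha's vanish) the suffix sum of the
     beta's from l + 1 on. *)
  have at_s: "(\<Sum>i=1..m-1. if 0 < k \<and> k \<le> i then \<alpha> i else 0) + (\<Sum>j=1..n-1. \<beta> j) = 0"
    if "k < m" for k
  proof -
    have "(\<Sum>i=1..m-1. \<alpha> i * ex m n i k) = (\<Sum>i=1..m-1. if 0 < k \<and> k \<le> i then \<alpha> i else 0)"
      using that by (intro sum.cong) (simp_all add: ex_coord_s)
    then show ?thesis
      using zero[of k] that by (simp add: ey_coord_s)
  qed
  have \<beta>_total: "(\<Sum>j=1..n-1. \<beta> j) = 0"
    using at_s[of 0] \<open>0 < m\<close> by simp
  have "(\<Sum>i=k..m-1. \<alpha> i) = 0" if "k \<in> {1..m-1}" for k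
  proof -
    from that have "k < m" and "0 < k"
      by auto
    then show ?thesis
      using at_s[of k] \<beta>_total by (simp add: sum_if_le_eq_sum_atLeast)
  qed
  then show \<alpha>: "\<forall>i\<in>{1..m-1}. \<alpha> i = 0"
    using zero_if_suffix_sums_zero by blast
  have "(\<Sum>j=k..n-1. \<beta> j) = 0" if "k \<in> {1..n-1}" for k
  proof (cases "k = 1")
    case True
    then show ?thesis using \<beta>_total by simp
  next
    case False
    define l where "l = k - 1"
    have l: "1 \<le> l" "l \<le> n - 2" "k = Suc l"
      using that False unfolding l_def by auto
    have ey_t: "ey m n j (m + l - 1) = int (m - 1) + (if k \<le> j then 1 else 0)" for j
      using ey_coord_t[OF l(1,2)] l(3) by (simp add: Suc_le_eq)
    have "0 = (\<Sum>i=1..m-1. \<alpha> i * ex m n i (m + l - 1)) + (\<Sum>j=1..n-1. \<beta> j * ey m n j (m + l - 1))"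
      using zero[of "m + l - 1"] by simp
    also have "(\<Sum>i=1..m-1. \<alpha> i * ex m n i (m + l - 1)) = 0"
      using \<alpha> by simp
    also have "(\<Sum>j=1..n-1. \<beta> j * ey m n j (m + l - 1))
        = (\<Sum>j=1..n-1. int (m - 1) * \<beta> j + (if k \<le> j then \<beta> j else 0))"
      using ey_t by (intro sum.cong refl) (simp add: distrib_left mult.commute)
    also have "\<dots> = int (m - 1) * (\<Sum>j=1..n-1. \<beta> j) + (\<Sum>j=k..n-1. \<beta> j)"
      using l by (simp add: sum.distrib sum_distrib_left sum_if_le_eq_sum_atLeast)
    finally show ?thesis
      using \<beta>_total by simp
  qed
  then show "\<forall>j\<in>{1..n-1}. \<beta> j = 0"
    using zero_if_suffix_sums_zero by blast
qed

(* The z at position grid_index m n i j is x_i y_j, reading x_0 = y_0 = 1. *)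
definition grid_index :: "nat \<Rightarrow> nat \<Rightarrow> nat \<Rightarrow> nat \<Rightarrow> nat" where
  "grid_index m n i j = (if j = 0 then Suc i else m + i * (n - 1) + j)"

definition row_sum :: "nat \<Rightarrow> nat \<Rightarrow> (nat \<Rightarrow> nat) \<Rightarrow> nat \<Rightarrow> nat" where
  "row_sum m n lam i = (\<Sum>j<n. lam (grid_index m n i j))"

definition col_sum :: "nat \<Rightarrow> nat \<Rightarrow> (nat \<Rightarrow> nat) \<Rightarrow> nat \<Rightarrow> nat" where
  "col_sum m n lam j = (\<Sum>i<m. lam (grid_index m n i j))"

lemma sum_grid:
  fixes g :: "nat \<Rightarrow> 'a::comm_monoid_add"
  assumes "0 < n"
  shows "(\<Sum>k=1..m*n. g k) = (\<Sum>i<m. \<Sum>j<n. g (grid_index m n i j))"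
proof -
  have "m * n = m + m * (n - 1)"
    using assms by (cases n) simp_all
  then have "(\<Sum>k=1..m*n. g k) = (\<Sum>k=1..m. g k) + (\<Sum>k=m+1..m+m*(n-1). g k)"
    by (simp only: sum.ub_add_nat[of 1 m])
  also have "(\<Sum>k=1..m. g k) = (\<Sum>i<m. g (Suc i))"
    by (simp add: sum.atLeast1_atMost_eq)
  also have "(\<Sum>k=m+1..m+m*(n-1). g k) = (\<Sum>i<m. \<Sum>j=1..n-1. g (m + i * (n - 1) + j))"
    by (rule sum_atLeastAtMost_blocks)
  also have "(\<Sum>i<m. g (Suc i)) + (\<Sum>i<m. \<Sum>j=1..n-1. g (m + i * (n - 1) + j))
      = (\<Sum>i<m. \<Sum>j<n. g (grid_index m n i j))"
  proof -
    have "(\<Sum>j<n. g (grid_index m n i j)) = g (Suc i) + (\<Sum>j=1..n-1. g (m + i * (n - 1) + j))"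
      for i
      unfolding sum_lessThan_split_first[OF assms] by (simp add: grid_index_def)
    then show ?thesis
      by (simp add: sum.distrib)
  qed
  finally show ?thesis .
qed

lemma ez_grid_index:
  assumes "i < m" and "j < n"
  shows "ez m n (grid_index m n i j) c = ex m n i c + (if j = 0 then 0 else ey m n j c)"
proof (cases "i = 0 \<or> j = 0")
  case True
  with assms show ?thesis
    unfolding grid_index_def ez_def by (auto simp: ex_def)
next
  case False
  then obtain i' j' where i': "i = Suc i'" and j': "j = Suc j'"
    by (meson not0_implies_Suc)
  let ?r = "grid_index m n i j - (m + n - 1) - 1"
  have "?r = i' * (n - 1) + j'" and "j' < n - 1"
    using assms i' j' unfolding grid_index_def by (simp_all add: algebra_simps)
  then have "?r div (n - 1) = i'" and "?r mod (n - 1) = j'"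
    by simp_all
  moreover have "grid_index m n i j \<noteq> 1" "\<not> grid_index m n i j \<le> m"
    "\<not> grid_index m n i j \<le> m + n - 1"
    using assms i' j' unfolding grid_index_def by auto
  ultimately show ?thesis
    using i' j' unfolding ez_def by (simp add: Let_def)
qed

lemma sum_mult_ez_eq:
  assumes "0 < n"
  shows "(\<Sum>k=1..m*n. int (lam k) * ez m n k c)
    = (\<Sum>i=1..m-1. int (row_sum m n lam i) * ex m n i c)
      + (\<Sum>j=1..n-1. int (col_sum m n lam j) * ey m n j c)"
proof -
  let ?l = "\<lambda>i j. int (lam (grid_index m n i j))"
  let ?ey = "\<lambda>j. if j = 0 then 0 else ey m n j c"
  have "(\<Sum>k=1..m*n. int (lam k) * ez m n k c) = (\<Sum>i<m. \<Sum>j<n. ?l i j * (ex m n i c + ?ey j))"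
    unfolding sum_grid[OF assms] by (intro sum.cong refl) (simp add: ez_grid_index)
  also have "\<dots> = (\<Sum>i<m. \<Sum>j<n. ?l i j * ex m n i c) + (\<Sum>j<n. \<Sum>i<m. ?l i j * ?ey j)"
    by (simp add: distrib_left sum.distrib sum.swap[where A = "{..<m}"])
  also have "\<dots> = (\<Sum>i<m. int (row_sum m n lam i) * ex m n i c) + (\<Sum>j<n. int (col_sum m n lam j) * ?ey j)"
    by (simp add: row_sum_def col_sum_def sum_distrib_right)
  also have "\<dots> = (\<Sum>i=1..m-1. int (row_sum m n lam i) * ex m n i c)
      + (\<Sum>j=1..n-1. int (col_sum m n lam j) * ey m n j c)"
    by (simp add: sum_lessThan_eq_sum_from_1 ex_def)
  finally show ?thesis .
qed

lemma bvec_eq: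
  assumes "0 < n"
  shows "bvec m n lam mu nu c
    = (\<Sum>i=1..m-1. (int (mu (Suc i)) - int (row_sum m n lam i)) * ex m n i c)
      + (\<Sum>j=1..n-1. (int (nu (Suc j)) - int (col_sum m n lam j)) * ey m n j c)"
  unfolding bvec_def sum_mult_ez_eq[OF assms] by (simp add: left_diff_distrib sum_subtractf)

lemma bvec_eq_0_iff:
  assumes "0 < m" and "0 < n"
  shows "(\<forall>c. bvec m n lam mu nu c = 0)
    \<longleftrightarrow> (\<forall>i\<in>{1..m-1}. mu (Suc i) = row_sum m n lam i)
      \<and> (\<forall>j\<in>{1..n-1}. nu (Suc j) = col_sum m n lam j)"
proof
  assume "\<forall>c. bvec m n lam mu nu c = 0"
  then have "(\<Sum>i=1..m-1. (int (mu (Suc i)) - int (row_sum m n lam i)) * ex m n i c)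
      + (\<Sum>j=1..n-1. (int (nu (Suc j)) - int (col_sum m n lam j)) * ey m n j c) = 0" for c
    unfolding bvec_eq[OF assms(2), symmetric] by blast
  from ex_ey_linearly_independent[OF assms(1) this]
  show "(\<forall>i\<in>{1..m-1}. mu (Suc i) = row_sum m n lam i)
      \<and> (\<forall>j\<in>{1..n-1}. nu (Suc j) = col_sum m n lam j)"
    by simp
qed (simp add: bvec_eq[OF assms(2)])

lemma sum_row_sum:
  assumes "0 < n"
  shows "(\<Sum>i<m. row_sum m n lam i) = (\<Sum>k=1..m*n. lam k)"
  unfolding row_sum_def sum_grid[OF assms] ..

lemma sum_col_sum:
  assumes "0 < n"
  shows "(\<Sum>j<n. col_sum m n lam j) = (\<Sum>k=1..m*n. lam k)"
  unfolding col_sum_def sum_grid[OF assms] by (rule sum.swap)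

lemma row_sum_eq:
  assumes "0 < n"
  shows "row_sum m n lam i = lam (Suc i) + (\<Sum>k=m+i*(n-1)+1..m+Suc i*(n-1). lam k)"
proof -
  have "(\<Sum>k=m+i*(n-1)+1..m+Suc i*(n-1). lam k) = (\<Sum>k=(m+i*(n-1))+1..(m+i*(n-1))+1*(n-1). lam k)"
    by (simp add: add_ac)
  also have "\<dots> = (\<Sum>j=1..n-1. lam (m + i*(n-1) + j))"
    using sum_atLeastAtMost_blocks[of lam "m + i*(n-1)" 1 "n-1"] by simp
  finally have "(\<Sum>k=m+i*(n-1)+1..m+Suc i*(n-1). lam k) = (\<Sum>j=1..n-1. lam (m + i*(n-1) + j))" .
  then show ?thesis
    unfolding row_sum_def sum_lessThan_split_first[OF assms] by (simp add: grid_index_def)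
qed

lemma col_sum_0: "col_sum m n lam 0 = (\<Sum>k=1..m. lam k)"
  unfolding col_sum_def grid_index_def by (simp add: sum.atLeast1_atMost_eq)

lemma col_sum_pos:
  assumes "0 < j"
  shows "col_sum m n lam j = (\<Sum>i<m. lam (m + i * (n - 1) + j))"
  unfolding col_sum_def grid_index_def using assms by simp

lemma mu_eq_row_sum_iff:
  assumes "0 < m" and "0 < n" and size: "(\<Sum>u=1..m. mu u) = (\<Sum>k=1..m*n. lam k)"
  shows "(\<forall>i\<in>{1..m-1}. mu (Suc i) = row_sum m n lam i)
    \<longleftrightarrow> (\<forall>u\<in>{1..m}. mu u = lam u + (\<Sum>i=m+(u-1)*(n-1)+1..m+u*(n-1). lam i))"
proof -
  have "(\<Sum>i<m. mu (Suc i)) = (\<Sum>u=1..m. mu u)"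
    by (simp add: sum.atLeast1_atMost_eq)
  also note size
  also have "(\<Sum>k=1..m*n. lam k) = (\<Sum>i<m. row_sum m n lam i)"
    by (rule sum_row_sum[OF \<open>0 < n\<close>, symmetric])
  finally have "(\<forall>i<m. mu (Suc i) = row_sum m n lam i)
      \<longleftrightarrow> (\<forall>i\<in>{1..m-1}. mu (Suc i) = row_sum m n lam i)"
    by (rule all_lessThan_eq_iff_all_pos_eq[OF _ \<open>0 < m\<close>])
  then show ?thesis
    unfolding ball_atLeast1_atMost_iff by (simp add: row_sum_eq[OF \<open>0 < n\<close>])
qed

lemma nu_eq_col_sum_iff:
  assumes "0 < m" and "0 < n" and size: "(\<Sum>v=1..n. nu v) = (\<Sum>k=1..m*n. lam k)"
  shows "(\<forall>j\<in>{1..n-1}. nu (Suc j) = col_sum m n lam j)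
    \<longleftrightarrow> nu 1 = (\<Sum>i=1..m. lam i)
      \<and> (\<forall>v\<in>{2..n}. nu v = (\<Sum>i=0..m-1. lam (m + (n-1)*i + v - 1)))"
proof -
  have "(\<Sum>j<n. nu (Suc j)) = (\<Sum>v=1..n. nu v)"
    by (simp add: sum.atLeast1_atMost_eq)
  also note size
  also have "(\<Sum>k=1..m*n. lam k) = (\<Sum>j<n. col_sum m n lam j)"
    by (rule sum_col_sum[OF \<open>0 < n\<close>, symmetric])
  finally have "(\<forall>j<n. nu (Suc j) = col_sum m n lam j)
      \<longleftrightarrow> (\<forall>j\<in>{1..n-1}. nu (Suc j) = col_sum m n lam j)"
    by (rule all_lessThan_eq_iff_all_pos_eq[OF _ \<open>0 < n\<close>])
  then have "(\<forall>j\<in>{1..n-1}. nu (Suc j) = col_sum m n lam j)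
      \<longleftrightarrow> nu 1 = col_sum m n lam 0 \<and> (\<forall>j\<in>{1..n-1}. nu (Suc j) = col_sum m n lam j)"
    unfolding all_lessThan_iff_zero_and_pos[OF \<open>0 < n\<close>] by auto
  moreover have "(\<forall>v\<in>{2..n}. nu v = (\<Sum>i=0..m-1. lam (m + (n-1)*i + v - 1)))
      \<longleftrightarrow> (\<forall>j\<in>{1..n-1}. nu (Suc j) = col_sum m n lam j)"
  proof -
    have "{2..n} = {Suc 1..Suc (n-1)}" and "{0..m-1} = {..<m}"
      using \<open>0 < m\<close> \<open>0 < n\<close> by auto
    then show ?thesis
      by (simp only: ball_atLeastAtMost_Suc_iff) (simp add: col_sum_pos mult.commute)
  qed
  ultimately show ?thesis
    by (simp add: col_sum_0)
qed

theorem mainTheorem3: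
  fixes m n N :: nat and lam mu nu :: "nat \<Rightarrow> nat"
  assumes "m > 0" and "n > 0" and "N > 0"
    and "is_partition N (m * n) lam"
    and "is_partition N m mu"
    and "is_partition N n nu"
  shows "(\<forall>c. bvec m n lam mu nu c = 0) \<longleftrightarrow>
     ((\<forall>u\<in>{1..m}. mu u = lam u + (\<Sum>i=m+(u-1)*(n-1)+1..m+u*(n-1). lam i))
      \<and> nu 1 = (\<Sum>i=1..m. lam i)
      \<and> (\<forall>v\<in>{2..n}. nu v = (\<Sum>i=0..m-1. lam (m + (n-1)*i + v - 1))))"
proof -
  have mu_size: "(\<Sum>u=1..m. mu u) = (\<Sum>k=1..m*n. lam k)"
    and nu_size: "(\<Sum>v=1..n. nu v) = (\<Sum>k=1..m*n. lam k)"
    using assms(4-6) unfolding is_partition_def by simp_all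
  show ?thesis
    unfolding bvec_eq_0_iff[OF assms(1,2)]
      mu_eq_row_sum_iff[OF assms(1,2) mu_size] nu_eq_col_sum_iff[OF assms(1,2) nu_size] ..
qed

end
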